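(* Suppose Assumption (A) holds. Let $f\in L_2^0(\Theta^K,\boldsymbol\mu_{\mathrm W})$ with $\|f\|_{L_2(\Theta^K,\boldsymbol\mu_{\mathrm W})}=1$, and denote by $\mathbb V_{\boldsymbol\mu_{\mathrm W}}[f]$ and $\mathbb V_{\boldsymbol\mu_\sigma}[f]$ the variances of $f$ under $\boldsymbol\mu_{\mathrm W}$ and $\boldsymbol\mu_\sigma$, $\sigma\in S_K$. Then $$0<\frac{\Lambda_m}{2-\Lambda_m}\le\frac{1}{|S_K|}\sum_{\sigma\in S_K}\mathbb V_{\boldsymbol\mu_\sigma}[f]\le\mathbb V_{\boldsymbol\mu_{\mathrm W}}[f]=1,$$ where $\Lambda_m=\min_{\sigma,\rho\in S_K}\Lambda_{\sigma,\rho}$.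
   Context: Setting: $\Theta$ is a separable Banach space with Borel $\sigma$-algebra, $\mu_{\mathrm{pr}}$ a probability measure on $\Theta$, $\Phi:\Theta\to\mathbb R$ measurable; temperatures $1=T_1<\dots<T_K\le\infty$; $\mu_k$ has $\mu_{\mathrm{pr}}$-density $\pi_k=e^{-\Phi/T_k}/Z_k$, $Z_k=\int e^{-\Phi/T_k}d\mu_{\mathrm{pr}}$ ($\mu_K=\mu_{\mathrm{pr}}$ if $T_K=\infty$). $S_K$ is a set of permutations of $\{1,\dots,K\}$ closed under inversion; for $\sigma\in S_K$, $\boldsymbol\mu_\sigma=\mu_{\sigma(1)}\times\dots\times\mu_{\sigma(K)}$ has density $\boldsymbol\pi_\sigma(\boldsymbol\theta)=\prod_k\pi_{\sigma(k)}(\theta_k)$ with respect to $\boldsymbol\mu_{\mathrm{pr}}=\mu_{\mathrm{pr}}^{\times K}$, and $\boldsymbol\mu_{\mathrm W}=\frac{1}{|S_K|}\sum_{\sigma\in S_K}\boldsymbol\mu_\sigma$. $L_2^0(\Theta^K,\boldsymbol\mu_{\mathrm W})$ is the set of $f\in L_2(\Theta^K,\boldsymbol\mu_{\mathrm W})$ with $\int f\,d\boldsymbol\mu_{\mathrm W}=0$. For $k=1,\dots,K$, $p_k$ is a Markov kernel on $\Theta$ generating an aperiodic, $\mu_k$-irreducible chain with invariant measure $\mu_k$, with Markov operator $P_k$. Assumption (A): (C1) each $p_k$ is $\mu_k$-reversible; (C2) each $P_k$ has an $L_2(\Theta,\mu_k)$-spectral gap, i.e. $\|P_k\|_{L_2^0(\mu_k)\to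 L_2^0(\mu_k)}<1$; (C3) for all $\sigma,\rho\in S_K$, $\Lambda_{\sigma,\rho}:=\int_{\Theta^K}\min\{\boldsymbol\pi_\sigma,\boldsymbol\pi_\rho\}\,d\boldsymbol\mu_{\mathrm{pr}}>0$. *)

theory Defs
  imports "HOL-Probability.Probability"
begin

text \<open>Phi / T, with the convention Phi / infinity = 0 (so that T = infinity gives the prior).\<close>
definition tempered :: "('a \<Rightarrow> real) \<Rightarrow> ereal \<Rightarrow> 'a \<Rightarrow> real" where
  "tempered \<Phi> t x = (if t = \<infinity> then 0 else \<Phi> x / real_of_ereal t)"

definition Zconst :: "'a measure \<Rightarrow> ('a \<Rightarrow> real) \<Rightarrow> ereal \<Rightarrow> real" where
  "Zconst M \<Phi> t = (\<integral>x. exp (- tempered \<Phi> t x) \<partial>M)"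

definition tdens :: "'a measure \<Rightarrow> ('a \<Rightarrow> real) \<Rightarrow> ereal \<Rightarrow> 'a \<Rightarrow> real" where
  "tdens M \<Phi> t x = exp (- tempered \<Phi> t x) / Zconst M \<Phi> t"

definition tmeas :: "'a measure \<Rightarrow> ('a \<Rightarrow> real) \<Rightarrow> ereal \<Rightarrow> 'a measure" where
  "tmeas M \<Phi> t = density M (\<lambda>x. ennreal (tdens M \<Phi> t x))"

definition perm_dens :: "'a measure \<Rightarrow> ('a \<Rightarrow> real) \<Rightarrow> (nat \<Rightarrow> ereal) \<Rightarrow> nat
    \<Rightarrow> (nat \<Rightarrow> nat) \<Rightarrow> (nat \<Rightarrow> 'a) \<Rightarrow> real" where
  "perm_dens M \<Phi> T K \<sigma> \<theta> = (\<Prod>k\<in>{1..K}. tdens M \<Phi> (T (\<sigma> k)) (\<theta> k))"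

definition perm_meas :: "'a measure \<Rightarrow> ('a \<Rightarrow> real) \<Rightarrow> (nat \<Rightarrow> ereal) \<Rightarrow> nat
    \<Rightarrow> (nat \<Rightarrow> nat) \<Rightarrow> (nat \<Rightarrow> 'a) measure" where
  "perm_meas M \<Phi> T K \<sigma> = (\<Pi>\<^sub>M k\<in>{1..K}. tmeas M \<Phi> (T (\<sigma> k)))"

definition mix_meas :: "'a measure \<Rightarrow> ('a \<Rightarrow> real) \<Rightarrow> (nat \<Rightarrow> ereal) \<Rightarrow> nat
    \<Rightarrow> (nat \<Rightarrow> nat) set \<Rightarrow> (nat \<Rightarrow> 'a) measure" where
  "mix_meas M \<Phi> T K S = measure_of (space (\<Pi>\<^sub>M k\<in>{1..K}. M)) (sets (\<Pi>\<^sub>M k\<in>{1..K}. M))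
      (\<lambda>A. ennreal (1 / real (card S)) * (\<Sum>\<sigma>\<in>S. emeasure (perm_meas M \<Phi> T K \<sigma>) A))"

definition overlap :: "'a measure \<Rightarrow> ('a \<Rightarrow> real) \<Rightarrow> (nat \<Rightarrow> ereal) \<Rightarrow> nat
    \<Rightarrow> (nat \<Rightarrow> nat) \<Rightarrow> (nat \<Rightarrow> nat) \<Rightarrow> real" where
  "overlap M \<Phi> T K \<sigma> \<rho> = (\<integral>\<theta>. min (perm_dens M \<Phi> T K \<sigma> \<theta>) (perm_dens M \<Phi> T K \<rho> \<theta>)
      \<partial>(\<Pi>\<^sub>M k\<in>{1..K}. M))"

definition variance_of :: "'b measure \<Rightarrow> ('b \<Rightarrow> real) \<Rightarrow> real" where
  "variance_of M f = (\<integral>x. (f x - (\<integral>y. f y \<partial>M))\<^sup>2 \<partial>M)"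

definition markov_op :: "('a \<Rightarrow> 'a measure) \<Rightarrow> ('a \<Rightarrow> real) \<Rightarrow> 'a \<Rightarrow> real" where
  "markov_op p g x = (\<integral>y. g y \<partial>(p x))"

fun kstep :: "('a \<Rightarrow> 'a measure) \<Rightarrow> 'a measure \<Rightarrow> nat \<Rightarrow> 'a \<Rightarrow> 'a measure" where
  "kstep p N 0 x = return N x"
| "kstep p N (Suc n) x = bind (kstep p N n x) p"

definition reversible :: "'a measure \<Rightarrow> ('a \<Rightarrow> 'a measure) \<Rightarrow> 'a measure \<Rightarrow> bool" where
  "reversible N p \<mu> \<longleftrightarrow> (\<forall>A\<in>sets N. \<forall>B\<in>sets N.
     (\<integral>\<^sup>+x. indicator A x * emeasure (p x) B \<partial>\<mu>) = (\<integral>\<^sup>+x. indicator B x * emeasure (p x) A \<partial>\<mu>))"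

text \<open>phi-irreducibility with phi = mu.\<close>
definition irreducible_wrt :: "'a measure \<Rightarrow> ('a \<Rightarrow> 'a measure) \<Rightarrow> 'a measure \<Rightarrow> bool" where
  "irreducible_wrt N p \<mu> \<longleftrightarrow> (\<forall>A\<in>sets N. emeasure \<mu> A > 0 \<longrightarrow>
     (\<forall>x\<in>space N. \<exists>n\<ge>1. emeasure (kstep p N n x) A > 0))"

text \<open>Aperiodicity: there is no d-cycle with d >= 2 (Meyn--Tweedie).\<close>
definition aperiodic_wrt :: "'a measure \<Rightarrow> ('a \<Rightarrow> 'a measure) \<Rightarrow> 'a measure \<Rightarrow> bool" where
  "aperiodic_wrt N p \<mu> \<longleftrightarrow> \<not> (\<exists>d::nat. d \<ge> 2 \<and> (\<exists>D::nat \<Rightarrow> 'a set.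
     (\<forall>i<d. D i \<in> sets N) \<and> disjoint_family_on D {..<d} \<and>
     (\<forall>i<d. \<forall>x\<in>D i. emeasure (p x) (D (Suc i mod d)) = 1) \<and>
     emeasure \<mu> (space N - (\<Union>i<d. D i)) = 0))"

definition spectral_gap :: "('a \<Rightarrow> 'a measure) \<Rightarrow> 'a measure \<Rightarrow> bool" where
  "spectral_gap p \<mu> \<longleftrightarrow> (\<exists>c::real. 0 \<le> c \<and> c < 1 \<and>
     (\<forall>g. g \<in> borel_measurable \<mu> \<and> integrable \<mu> (\<lambda>x. (g x)\<^sup>2) \<and> (\<integral>x. g x \<partial>\<mu>) = 0 \<longrightarrow>
        (\<integral>x. (markov_op p g x)\<^sup>2 \<partial>\<mu>) \<le> c\<^sup>2 * (\<integral>x. (g x)\<^sup>2 \<partial>\<mu>)))"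

end

theory Submission
  imports Defs
begin

text \<open>
  For two probability densities \<open>\<pi>\<^sub>1, \<pi>\<^sub>2\<close> with overlap
  \<open>\<Lambda> = \<integral> min \<pi>\<^sub>1 \<pi>\<^sub>2\<close>, the pointwise bound
  \<open>\<pi>\<^sub>1 (f - p)\<^sup>2 + \<pi>\<^sub>2 (f - q)\<^sup>2 \<ge> min \<pi>\<^sub>1 \<pi>\<^sub>2 (p - q)\<^sup>2 / 2\<close>
  integrates to \<open>V\<^sub>1 + (m\<^sub>1 - p)\<^sup>2 + V\<^sub>2 + (m\<^sub>2 - q)\<^sup>2 \<ge> \<Lambda> (p - q)\<^sup>2 / 2\<close>;
  optimising over \<open>p, q\<close> gives \<open>\<Lambda> (m\<^sub>1 - m\<^sub>2)\<^sup>2 \<le> 2 (1 - \<Lambda>) (V\<^sub>1 + V\<^sub>2)\<close>, so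
  the component means cannot drift apart unless the component variances are large.
  For the mixture \<open>\<mu>\<^sub>W\<close> of the \<open>\<mu>\<^sub>\<sigma>\<close> and a centred \<open>f\<close>, the means \<open>m\<^sub>\<sigma>\<close> sum to
  zero, and summing the pairwise bound over all pairs turns
  \<open>\<Sum>\<^sub>\<sigma> (V\<^sub>\<sigma> + m\<^sub>\<sigma>\<^sup>2) = |S| \<cdot> Var\<^sub>W f\<close> into
  \<open>\<Lambda> |S| Var\<^sub>W f \<le> (2 - \<Lambda>) \<Sum>\<^sub>\<sigma> V\<^sub>\<sigma>\<close>. The upper bound is the law of total variance.
\<close>

section \<open>Overlap bounds for mixtures of densities\<close>

lemma min_mult_square_diff_le:
  fixes u v x p q :: real
  assumes "0 \<le> u" "0 \<le> v"
  shows "min u v * (p - q)\<^sup>2 / 2 \<le> u * (x - p)\<^sup>2 + v * (x - q)\<^sup>2"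
proof -
  have "(x - p)\<^sup>2 + (x - q)\<^sup>2 = (p - q)\<^sup>2 / 2 + (2 * x - p - q)\<^sup>2 / 2"
    by (simp add: power2_eq_square field_simps)
  then have "(p - q)\<^sup>2 / 2 \<le> (x - p)\<^sup>2 + (x - q)\<^sup>2"
    by simp
  then have "min u v * (p - q)\<^sup>2 / 2 \<le> min u v * ((x - p)\<^sup>2 + (x - q)\<^sup>2)"
    using assms mult_left_mono[of "(p - q)\<^sup>2 / 2" _ "min u v"] by simp
  also have "\<dots> \<le> u * (x - p)\<^sup>2 + v * (x - q)\<^sup>2"
    unfolding distrib_left by (intro add_mono mult_right_mono) simp_all
  finally show ?thesis .
qed

lemma mean_gap_le_of_quadratic_bound:
  fixes l v1 v2 m1 m2 :: real
  assumes bound: "\<And>p q. l * (p - q)\<^sup>2 / 2 \<le> (v1 + (m1 - p)\<^sup>2) + (v2 + (m2 - q)\<^sup>2)"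
    and "l \<le> 1"
  shows "l * (m1 - m2)\<^sup>2 \<le> 2 * (1 - l) * (v1 + v2)"
proof (cases "l = 1")
  case True
  \<comment> \<open>along \<open>p = m1 + t, q = m2 - t\<close> the bound is affine in \<open>t\<close>, so it fails for a suitable \<open>t\<close>
    unless \<open>m1 = m2\<close>\<close>
  have "m1 = m2"
  proof (rule ccontr)
    define t where "t = (v1 + v2 + 1) / (2 * (m1 - m2))"
    assume "m1 \<noteq> m2"
    then have "2 * (m1 - m2) * t = v1 + v2 + 1"
      by (simp add: t_def)
    then have "(m1 - m2 + 2 * t)\<^sup>2 / 2 = (m1 - m2)\<^sup>2 / 2 + (v1 + v2 + 1) + 2 * t\<^sup>2"
      by (simp add: power2_eq_square field_simps)
    moreover have "(m1 - m2 + 2 * t)\<^sup>2 / 2 \<le> (v1 + t\<^sup>2) + (v2 + t\<^sup>2)"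
      using bound[of "m1 + t" "m2 - t"] True by (simp add: algebra_simps)
    ultimately show False
      using zero_le_power2[of "m1 - m2"] by linarith
  qed
  then show ?thesis using True by simp
next
  case False
  define d where "d = m1 - m2"
  define e where "e = 1 - l"
  from False \<open>l \<le> 1\<close> have "0 < e" by (simp add: e_def)
  define t where "t = l * d / (2 * e)"
  \<comment> \<open>the minimising choice of the free parameters\<close>
  have "l * (d + 2 * t)\<^sup>2 / 2 \<le> (v1 + v2) + 2 * t\<^sup>2"
    using bound[of "m1 + t" "m2 - t"] by (simp add: d_def algebra_simps)
  moreover have "l * (d + 2 * t)\<^sup>2 / 2 - 2 * t\<^sup>2 = l * d\<^sup>2 / (2 * e)"
  proof -
    have l: "l = 1 - e" by (simp add: e_def)
    show ?thesis
      using \<open>0 < e\<close> unfolding t_def l by (simp add: power2_eq_square field_simps)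
  qed
  ultimately have "l * d\<^sup>2 / (2 * e) \<le> v1 + v2"
    by linarith
  then show ?thesis
    using \<open>0 < e\<close> by (simp add: d_def e_def pos_divide_le_eq mult.commute mult.left_commute)
qed

lemma sum_pairwise_square_diff:
  fixes m :: "'s \<Rightarrow> real"
  shows "(\<Sum>s\<in>S. \<Sum>r\<in>S. (m s - m r)\<^sup>2) = 2 * (card S * (\<Sum>s\<in>S. (m s)\<^sup>2) - (\<Sum>s\<in>S. m s)\<^sup>2)"
proof -
  have "(\<Sum>s\<in>S. \<Sum>r\<in>S. (m s - m r)\<^sup>2) = (\<Sum>s\<in>S. \<Sum>r\<in>S. (m s)\<^sup>2 + (m r)\<^sup>2 - 2 * m s * m r)"
    by (simp add: power2_diff)
  also have "\<dots> = 2 * (card S * (\<Sum>s\<in>S. (m s)\<^sup>2) - (\<Sum>s\<in>S. m s)\<^sup>2)"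
    by (simp add: sum_subtractf sum.distrib sum_distrib_left sum_distrib_right power2_eq_square
        algebra_simps)
  finally show ?thesis .
qed

lemma pairwise_mean_gap_sum_bound:
  fixes m v :: "'s \<Rightarrow> real" and L :: real
  assumes "finite S" "S \<noteq> {}" "(\<Sum>s\<in>S. m s) = 0"
    and gap: "\<And>s r. s \<in> S \<Longrightarrow> r \<in> S \<Longrightarrow> L * (m s - m r)\<^sup>2 \<le> 2 * (1 - L) * (v s + v r)"
  shows "L * (\<Sum>s\<in>S. v s + (m s)\<^sup>2) \<le> (2 - L) * (\<Sum>s\<in>S. v s)"
proof -
  define n where "n = real (card S)"
  have "0 < n" using assms(1,2) by (simp add: n_def card_gt_0_iff)
  have "L * (2 * n * (\<Sum>s\<in>S. (m s)\<^sup>2)) = (\<Sum>s\<in>S. \<Sum>r\<in>S. L * (m s - m r)\<^sup>2)"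
    using assms(3) by (simp add: sum_pairwise_square_diff n_def flip: sum_distrib_left)
  also have "\<dots> \<le> (\<Sum>s\<in>S. \<Sum>r\<in>S. 2 * (1 - L) * (v s + v r))"
    using gap by (intro sum_mono) auto
  also have "\<dots> = 2 * (1 - L) * (\<Sum>s\<in>S. \<Sum>r\<in>S. v s + v r)"
    by (simp add: sum_distrib_left)
  also have "(\<Sum>s\<in>S. \<Sum>r\<in>S. v s + v r) = 2 * n * (\<Sum>s\<in>S. v s)"
    by (simp add: sum.distrib n_def flip: sum_distrib_left)
  finally have "(2 * n) * (L * (\<Sum>s\<in>S. (m s)\<^sup>2)) \<le> (2 * n) * (2 * (1 - L) * (\<Sum>s\<in>S. v s))"
    by (simp only: ac_simps)
  then have "L * (\<Sum>s\<in>S. (m s)\<^sup>2) \<le> 2 * (1 - L) * (\<Sum>s\<in>S. v s)"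
    by (rule mult_left_le_imp_le) (use \<open>0 < n\<close> in simp)
  then show ?thesis
    by (simp add: sum.distrib algebra_simps)
qed

lemma Min_over_pairs:
  fixes g :: "'s \<Rightarrow> 's \<Rightarrow> 'b::linorder"
  assumes "finite S" "S \<noteq> {}"
  obtains s0 r0 where "s0 \<in> S" "r0 \<in> S" "Min {g s r | s r. s \<in> S \<and> r \<in> S} = g s0 r0"
    and "\<And>s r. s \<in> S \<Longrightarrow> r \<in> S \<Longrightarrow> Min {g s r | s r. s \<in> S \<and> r \<in> S} \<le> g s r"
proof -
  have pairs: "{g s r | s r. s \<in> S \<and> r \<in> S} = case_prod g ` (S \<times> S)"
    by auto
  then have "Min {g s r | s r. s \<in> S \<and> r \<in> S} \<in> {g s r | s r. s \<in> S \<and> r \<in> S}"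
    using assms by (intro Min_in) auto
  moreover have "Min {g s r | s r. s \<in> S \<and> r \<in> S} \<le> g s r" if "s \<in> S" "r \<in> S" for s r
    using assms that pairs by (intro Min_le) auto
  ultimately show ?thesis
    using that by blast
qed

lemma (in prob_space) integral_square_diff_const:
  fixes f :: "'a \<Rightarrow> real"
  assumes "f \<in> borel_measurable M" "integrable M (\<lambda>x. (f x)\<^sup>2)"
  shows "integrable M (\<lambda>x. (f x - c)\<^sup>2)"
    and "(\<integral>x. (f x - c)\<^sup>2 \<partial>M) = variance_of M f + (expectation f - c)\<^sup>2"
proof -
  have "integrable M f"
    using assms by (rule square_integrable_imp_integrable)
  then show "integrable M (\<lambda>x. (f x - c)\<^sup>2)"
    using assms(2) by (simp add: power2_diff)
  have "(\<integral>x. (f x - c)\<^sup>2 \<partial>M) = (\<integral>x. (f x)\<^sup>2 - 2 * c * f x + c\<^sup>2 \<partial>M)"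
    by (simp add: power2_diff algebra_simps)
  also have "\<dots> = expectation (\<lambda>x. (f x)\<^sup>2) - 2 * c * expectation f + c\<^sup>2"
    using \<open>integrable M f\<close> assms(2) by (simp add: prob_space)
  also have "\<dots> = variance_of M f + (expectation f - c)\<^sup>2"
    using variance_eq[OF \<open>integrable M f\<close> assms(2)] by (simp add: variance_of_def power2_diff)
  finally show "(\<integral>x. (f x - c)\<^sup>2 \<partial>M) = variance_of M f + (expectation f - c)\<^sup>2" .
qed

lemma prob_space_density_integral:
  fixes g :: "'b \<Rightarrow> real"
  assumes "prob_space (density P g)" "g \<in> borel_measurable P" "\<And>x. 0 \<le> g x"
  shows "integrable P g" and "(\<integral>x. g x \<partial>P) = 1"
proof -
  interpret prob_space "density P g" by fact
  have "integrable (density P g) (\<lambda>_. 1 :: real)"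
    by simp
  then show "integrable P g"
    using integrable_density[of "\<lambda>_. 1 :: real" P g] assms by simp
  have "(\<integral>x. 1 \<partial>density P g) = (\<integral>x. g x \<partial>P)"
    using integral_density[of "\<lambda>_. 1 :: real" P g] assms(2,3) by (simp del: integral_const)
  then show "(\<integral>x. g x \<partial>P) = 1"
    using prob_space by simp
qed

lemma integral_min_density_le_1:
  fixes \<pi>1 \<pi>2 :: "'b \<Rightarrow> real"
  assumes "prob_space (density P \<pi>1)" "\<pi>1 \<in> borel_measurable P" "\<And>x. 0 \<le> \<pi>1 x"
  shows "(\<integral>x. min (\<pi>1 x) (\<pi>2 x) \<partial>P) \<le> 1"
proof -
  have "(\<integral>x. min (\<pi>1 x) (\<pi>2 x) \<partial>P) \<le> (\<integral>x. \<pi>1 x \<partial>P)"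
    using assms prob_space_density_integral(1)[OF assms] by (intro integral_mono') auto
  then show ?thesis
    using prob_space_density_integral(2)[OF assms] by simp
qed

lemma density_overlap_mean_gap:
  fixes P :: "'b measure" and \<pi>1 \<pi>2 f :: "'b \<Rightarrow> real"
  defines "\<mu>1 \<equiv> density P \<pi>1" and "\<mu>2 \<equiv> density P \<pi>2"
    and "\<Lambda> \<equiv> \<integral>x. min (\<pi>1 x) (\<pi>2 x) \<partial>P"
  assumes "prob_space \<mu>1" "prob_space \<mu>2"
    and [measurable]: "\<pi>1 \<in> borel_measurable P" "\<pi>2 \<in> borel_measurable P" "f \<in> borel_measurable P"
    and nonneg: "\<And>x. 0 \<le> \<pi>1 x" "\<And>x. 0 \<le> \<pi>2 x"
    and "integrable \<mu>1 (\<lambda>x. (f x)\<^sup>2)" "integrable \<mu>2 (\<lambda>x. (f x)\<^sup>2)"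
  shows "\<Lambda> * ((\<integral>x. f x \<partial>\<mu>1) - (\<integral>x. f x \<partial>\<mu>2))\<^sup>2
    \<le> 2 * (1 - \<Lambda>) * (variance_of \<mu>1 f + variance_of \<mu>2 f)"
proof (rule mean_gap_le_of_quadratic_bound)
  interpret \<mu>1: prob_space \<mu>1 by fact
  interpret \<mu>2: prob_space \<mu>2 by fact
  fix p q :: real
  have f_meas: "f \<in> borel_measurable \<mu>1" "f \<in> borel_measurable \<mu>2"
    by (simp_all add: \<mu>1_def \<mu>2_def)
  have int1: "integrable P (\<lambda>x. \<pi>1 x * (f x - p)\<^sup>2)"
    using \<mu>1.integral_square_diff_const(1)[of f p] assms nonneg by (simp add: integrable_density)
  have int2: "integrable P (\<lambda>x. \<pi>2 x * (f x - q)\<^sup>2)"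
    using \<mu>2.integral_square_diff_const(1)[of f q] assms nonneg by (simp add: integrable_density)
  have "\<Lambda> * (p - q)\<^sup>2 / 2 = (\<integral>x. min (\<pi>1 x) (\<pi>2 x) * (p - q)\<^sup>2 / 2 \<partial>P)"
    by (simp add: \<Lambda>_def)
  also have "\<dots> \<le> (\<integral>x. \<pi>1 x * (f x - p)\<^sup>2 + \<pi>2 x * (f x - q)\<^sup>2 \<partial>P)"
    using int1 int2 nonneg by (intro integral_mono' min_mult_square_diff_le) auto
  also have "\<dots> = (\<integral>x. (f x - p)\<^sup>2 \<partial>\<mu>1) + (\<integral>x. (f x - q)\<^sup>2 \<partial>\<mu>2)"
    using int1 int2 nonneg by (simp add: \<mu>1_def \<mu>2_def integral_density)
  also have "\<dots> = (variance_of \<mu>1 f + ((\<integral>x. f x \<partial>\<mu>1) - p)\<^sup>2)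
      + (variance_of \<mu>2 f + ((\<integral>x. f x \<partial>\<mu>2) - q)\<^sup>2)"
    using f_meas \<open>integrable \<mu>1 (\<lambda>x. (f x)\<^sup>2)\<close> \<open>integrable \<mu>2 (\<lambda>x. (f x)\<^sup>2)\<close>
    by (simp add: \<mu>1.integral_square_diff_const(2) \<mu>2.integral_square_diff_const(2))
  finally show "\<Lambda> * (p - q)\<^sup>2 / 2 \<le> \<dots>" .
next
  show "\<Lambda> \<le> 1"
    unfolding \<Lambda>_def using assms by (intro integral_min_density_le_1) auto
qed

lemma integral_density_scaled_sum:
  fixes P :: "'b measure" and \<pi> :: "'s \<Rightarrow> 'b \<Rightarrow> real" and g :: "'b \<Rightarrow> real"
  assumes "finite S" "0 \<le> c"
    and meas: "\<And>s. s \<in> S \<Longrightarrow> \<pi> s \<in> borel_measurable P" and nonneg: "\<And>s x. s \<in> S \<Longrightarrow> 0 \<le> \<pi> s x"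
    and "g \<in> borel_measurable P" and int: "\<And>s. s \<in> S \<Longrightarrow> integrable (density P (\<pi> s)) g"
  shows "(\<integral>x. g x \<partial>density P (\<lambda>x. c * (\<Sum>s\<in>S. \<pi> s x)))
    = c * (\<Sum>s\<in>S. \<integral>x. g x \<partial>density P (\<pi> s))"
proof -
  have int_P: "integrable P (\<lambda>x. \<pi> s x * g x)" if "s \<in> S" for s
    using int[OF that] integrable_density[of g P "\<pi> s"] assms that by simp
  have "(\<integral>x. g x \<partial>density P (\<lambda>x. c * (\<Sum>s\<in>S. \<pi> s x)))
      = (\<integral>x. c * (\<Sum>s\<in>S. \<pi> s x * g x) \<partial>P)"
    using assms by (subst integral_density)
      (auto intro!: borel_measurable_sum sum_nonneg mult_nonneg_nonneg
        simp: sum_distrib_right mult.assoc)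
  also have "\<dots> = c * (\<Sum>s\<in>S. \<integral>x. \<pi> s x * g x \<partial>P)"
    using int_P by (simp add: Bochner_Integration.integral_sum)
  also have "\<dots> = c * (\<Sum>s\<in>S. \<integral>x. g x \<partial>density P (\<pi> s))"
    using assms by (simp add: integral_density)
  finally show ?thesis .
qed

lemma integrable_density_scaled_sum_component:
  fixes P :: "'b measure" and \<pi> :: "'s \<Rightarrow> 'b \<Rightarrow> real" and g :: "'b \<Rightarrow> real"
  assumes "finite S" "0 < c" "s \<in> S"
    and meas: "\<And>s. s \<in> S \<Longrightarrow> \<pi> s \<in> borel_measurable P" and nonneg: "\<And>s x. s \<in> S \<Longrightarrow> 0 \<le> \<pi> s x"
    and "g \<in> borel_measurable P" and int: "integrable (density P (\<lambda>x. c * (\<Sum>s\<in>S. \<pi> s x))) g"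
  shows "integrable (density P (\<pi> s)) g"
proof -
  have "integrable P (\<lambda>x. c * (\<Sum>s\<in>S. \<pi> s x) * g x)"
    using int assms
    by (subst (asm) integrable_density)
      (auto intro!: borel_measurable_sum sum_nonneg mult_nonneg_nonneg)
  then have "integrable P (\<lambda>x. 1 / c * (c * (\<Sum>s\<in>S. \<pi> s x) * g x))"
    by (rule integrable_mult_right)
  then have "integrable P (\<lambda>x. \<pi> s x * g x)"
  proof (rule Bochner_Integration.integrable_bound)
    show "(\<lambda>x. \<pi> s x * g x) \<in> borel_measurable P"
      using assms by simp
    have "\<pi> s x \<le> (\<Sum>s\<in>S. \<pi> s x)" for x
      using assms by (intro member_le_sum) auto
    then show "AE x in P. norm (\<pi> s x * g x) \<le> norm (1 / c * (c * (\<Sum>s\<in>S. \<pi> s x) * g x))"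
      using assms
      by (intro AE_I2) (simp add: abs_mult mult_right_mono order.trans[OF _ abs_ge_self])
  qed
  then show ?thesis
    using assms by (simp add: integrable_density)
qed

lemma mixture_moments:
  fixes P :: "'b measure" and S :: "'s set" and \<pi> :: "'s \<Rightarrow> 'b \<Rightarrow> real" and f :: "'b \<Rightarrow> real"
  defines "W \<equiv> density P (\<lambda>x. 1 / real (card S) * (\<Sum>s\<in>S. \<pi> s x))"
  assumes S: "finite S" "S \<noteq> {}"
    and prob: "\<And>s. s \<in> S \<Longrightarrow> prob_space (density P (\<pi> s))"
    and meas: "\<And>s. s \<in> S \<Longrightarrow> \<pi> s \<in> borel_measurable P"
    and nonneg: "\<And>s x. s \<in> S \<Longrightarrow> 0 \<le> \<pi> s x"
    and f: "f \<in> borel_measurable P" "integrable W (\<lambda>x. (f x)\<^sup>2)" "(\<integral>x. f x \<partial>W) = 0"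
  shows "(\<Sum>s\<in>S. \<integral>x. f x \<partial>density P (\<pi> s)) = 0"
    and "(\<Sum>s\<in>S. variance_of (density P (\<pi> s)) f + (\<integral>x. f x \<partial>density P (\<pi> s))\<^sup>2)
      = card S * variance_of W f"
proof -
  have "0 < card S"
    using S by (simp add: card_gt_0_iff)
  have f2: "integrable (density P (\<pi> s)) (\<lambda>x. (f x)\<^sup>2)" if "s \<in> S" for s
    using f \<open>0 < card S\<close> meas nonneg that S(1) unfolding W_def
    by (intro integrable_density_scaled_sum_component[where c = "1 / real (card S)"]) auto
  have f1: "integrable (density P (\<pi> s)) f" if "s \<in> S" for s
    using finite_measure.square_integrable_imp_integrable[OF prob_space.axioms(1)[OF prob[OF that]]
        _ f2[OF that]] f
    by simp
  have "0 = (\<integral>x. f x \<partial>W)"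
    using f by simp
  also have "\<dots> = 1 / real (card S) * (\<Sum>s\<in>S. \<integral>x. f x \<partial>density P (\<pi> s))"
    unfolding W_def using S f1 meas nonneg f by (intro integral_density_scaled_sum) auto
  finally show "(\<Sum>s\<in>S. \<integral>x. f x \<partial>density P (\<pi> s)) = 0"
    using \<open>0 < card S\<close> by simp
  have "card S * variance_of W f = card S * (\<integral>x. (f x)\<^sup>2 \<partial>W)"
    using f by (simp add: variance_of_def)
  also have "\<dots> = (\<Sum>s\<in>S. \<integral>x. (f x)\<^sup>2 \<partial>density P (\<pi> s))"
    unfolding W_def using S f2 meas nonneg f \<open>0 < card S\<close>
    by (subst integral_density_scaled_sum) auto
  also have "\<dots> = (\<Sum>s\<in>S. variance_of (density P (\<pi> s)) f + (\<integral>x. f x \<partial>density P (\<pi> s))\<^sup>2)"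
  proof (rule sum.cong[OF refl])
    fix s assume "s \<in> S"
    then show "(\<integral>x. (f x)\<^sup>2 \<partial>density P (\<pi> s))
        = variance_of (density P (\<pi> s)) f + (\<integral>x. f x \<partial>density P (\<pi> s))\<^sup>2"
      using prob_space.integral_square_diff_const(2)[OF prob _ f2, of s 0] f by simp
  qed
  finally show "(\<Sum>s\<in>S. variance_of (density P (\<pi> s)) f + (\<integral>x. f x \<partial>density P (\<pi> s))\<^sup>2)
      = card S * variance_of W f" ..
qed

lemma mixture_variance_bounds:
  fixes P :: "'b measure" and S :: "'s set" and \<pi> :: "'s \<Rightarrow> 'b \<Rightarrow> real"
    and f :: "'b \<Rightarrow> real" and L :: real
  defines "W \<equiv> density P (\<lambda>x. 1 / real (card S) * (\<Sum>s\<in>S. \<pi> s x))"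
  assumes S: "finite S" "S \<noteq> {}"
    and prob: "\<And>s. s \<in> S \<Longrightarrow> prob_space (density P (\<pi> s))"
    and meas: "\<And>s. s \<in> S \<Longrightarrow> \<pi> s \<in> borel_measurable P"
    and nonneg: "\<And>s x. s \<in> S \<Longrightarrow> 0 \<le> \<pi> s x"
    and f: "f \<in> borel_measurable P" "integrable W (\<lambda>x. (f x)\<^sup>2)" "(\<integral>x. f x \<partial>W) = 0"
    and L: "\<And>s r. s \<in> S \<Longrightarrow> r \<in> S \<Longrightarrow> L \<le> (\<integral>x. min (\<pi> s x) (\<pi> r x) \<partial>P)"
  shows "L / (2 - L) * variance_of W f
      \<le> 1 / real (card S) * (\<Sum>s\<in>S. variance_of (density P (\<pi> s)) f)"
    and "1 / real (card S) * (\<Sum>s\<in>S. variance_of (density P (\<pi> s)) f) \<le> variance_of W f"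
proof -
  define m where "m s = (\<integral>x. f x \<partial>density P (\<pi> s))" for s
  define v where "v s = variance_of (density P (\<pi> s)) f" for s
  note moments = mixture_moments[OF S prob meas nonneg f[unfolded W_def], folded W_def m_def v_def]
  have "0 < card S"
    using S by (simp add: card_gt_0_iff)
  have v_nonneg: "0 \<le> v s" for s
    by (simp add: v_def variance_of_def)
  obtain s0 where "s0 \<in> S"
    using S by blast
  then have "L \<le> 1"
    using L integral_min_density_le_1[OF prob meas nonneg] by (meson order.trans)
  have gap: "L * (m s - m r)\<^sup>2 \<le> 2 * (1 - L) * (v s + v r)" if "s \<in> S" "r \<in> S" for s r
  proof -
    define \<Lambda> where "\<Lambda> = (\<integral>x. min (\<pi> s x) (\<pi> r x) \<partial>P)"
    have "L * (m s - m r)\<^sup>2 \<le> \<Lambda> * (m s - m r)\<^sup>2"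
      using L[OF that] by (simp add: \<Lambda>_def mult_right_mono)
    also have "\<dots> \<le> 2 * (1 - \<Lambda>) * (v s + v r)"
      unfolding \<Lambda>_def m_def v_def using that prob meas nonneg f \<open>0 < card S\<close> S(1)
      by (intro density_overlap_mean_gap
          integrable_density_scaled_sum_component[where c = "1 / real (card S)"])
        (auto simp: W_def)
    also have "\<dots> \<le> 2 * (1 - L) * (v s + v r)"
      using L[OF that] v_nonneg by (simp add: \<Lambda>_def mult_right_mono)
    finally show ?thesis .
  qed
  have "L * (card S * variance_of W f) \<le> (2 - L) * (\<Sum>s\<in>S. v s)"
    using pairwise_mean_gap_sum_bound[OF S moments(1) gap] by (simp add: moments(2))
  then show "L / (2 - L) * variance_of W f \<le> 1 / real (card S) * (\<Sum>s\<in>S. v s)"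
    using \<open>L \<le> 1\<close> \<open>0 < card S\<close> by (simp add: field_simps)
  have "(\<Sum>s\<in>S. v s) \<le> (\<Sum>s\<in>S. v s + (m s)\<^sup>2)"
    by (intro sum_mono) simp
  then show "1 / real (card S) * (\<Sum>s\<in>S. v s) \<le> variance_of W f"
    using \<open>0 < card S\<close> by (simp add: moments(2) field_simps)
qed

section \<open>Tempered product measures\<close>

lemma Zconst_pos:
  assumes "prob_space M" "integrable M (\<lambda>x. exp (- tempered \<Phi> t x))"
  shows "0 < Zconst M \<Phi> t"
proof -
  interpret prob_space M by fact
  have "(\<integral>x. exp (- tempered \<Phi> t x) \<partial>M) \<noteq> 0"
    using integral_nonneg_eq_0_iff_AE[OF assms(2)] by (simp add: AE_False emeasure_space_1)
  moreover have "0 \<le> (\<integral>x. exp (- tempered \<Phi> t x) \<partial>M)"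
    by simp
  ultimately show ?thesis
    unfolding Zconst_def by linarith
qed

lemma tdens_pos:
  assumes "prob_space M" "integrable M (\<lambda>x. exp (- tempered \<Phi> t x))"
  shows "0 < tdens M \<Phi> t x"
  using Zconst_pos[OF assms] by (simp add: tdens_def)

lemma tdens_borel_measurable:
  assumes "integrable M (\<lambda>x. exp (- tempered \<Phi> t x))"
  shows "tdens M \<Phi> t \<in> borel_measurable M"
  using borel_measurable_integrable[OF assms] unfolding tdens_def[abs_def] by measurable

lemma prob_space_tmeas:
  assumes "prob_space M" "integrable M (\<lambda>x. exp (- tempered \<Phi> t x))"
  shows "prob_space (tmeas M \<Phi> t)"
proof
  have "integrable M (tdens M \<Phi> t)"
    using assms(2) by (simp add: tdens_def[abs_def])
  moreover have "(\<integral>x. tdens M \<Phi> t x \<partial>M) = 1"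
    using Zconst_pos[OF assms] by (simp add: tdens_def[abs_def] Zconst_def)
  ultimately have "(\<integral>\<^sup>+x. ennreal (tdens M \<Phi> t x) \<partial>M) = 1"
    using tdens_pos[OF assms] by (subst nn_integral_eq_integral) (auto intro: less_imp_le)
  then show "emeasure (tmeas M \<Phi> t) (space (tmeas M \<Phi> t)) = 1"
    using tdens_borel_measurable[OF assms(2)] by (simp add: tmeas_def emeasure_density)
qed

lemma indicator_PiE_eq_prod:
  assumes "finite I" "x \<in> extensional I"
  shows "(indicator (Pi\<^sub>E I A) x :: 'c::comm_semiring_1) = (\<Prod>i\<in>I. indicator (A i) (x i))"
proof (cases "x \<in> Pi\<^sub>E I A")
  case True
  then have "(\<Prod>i\<in>I. indicator (A i) (x i) :: 'c) = 1"
    by (intro prod.neutral) (simp add: PiE_iff)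
  with indicator_simps(1)[OF True] show ?thesis
    by (simp only:)
next
  case False
  then obtain i where "i \<in> I" "x i \<notin> A i"
    using assms(2) by (auto simp: PiE_def)
  then have "(\<Prod>i\<in>I. indicator (A i) (x i) :: 'c) = 0"
    using assms(1) by (intro prod_zero bexI[of _ i]) auto
  with indicator_simps(2)[OF False] show ?thesis
    by (simp only:)
qed

lemma PiM_density:
  fixes M :: "'i \<Rightarrow> 'a measure" and g :: "'i \<Rightarrow> 'a \<Rightarrow> ennreal"
  assumes "finite I" "\<And>i. sigma_finite_measure (M i)"
    and sf: "\<And>i. i \<in> I \<Longrightarrow> sigma_finite_measure (density (M i) (g i))"
    and g: "\<And>i. i \<in> I \<Longrightarrow> g i \<in> borel_measurable (M i)"
  shows "(\<Pi>\<^sub>M i\<in>I. density (M i) (g i)) = density (\<Pi>\<^sub>M i\<in>I. M i) (\<lambda>x. \<Prod>i\<in>I. g i (x i))"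
proof -
  \<comment> \<open>\<open>product_sigma_finite\<close> needs \<sigma>-finite factors at every index, while the densities
    are only known to be \<sigma>-finite on \<open>I\<close>.\<close>
  define N where "N i = (if i \<in> I then density (M i) (g i) else M i)" for i
  interpret M: product_sigma_finite M
    using assms(2) by (simp add: product_sigma_finite_def)
  interpret N: product_sigma_finite N
    using assms(2) sf by (simp add: product_sigma_finite_def N_def)
  have sets_N: "sets (N i) = sets (M i)" for i
    by (simp add: N_def)
  have "density (\<Pi>\<^sub>M i\<in>I. M i) (\<lambda>x. \<Prod>i\<in>I. g i (x i)) = (\<Pi>\<^sub>M i\<in>I. N i)"
  proof (rule N.PiM_eqI[OF \<open>finite I\<close>])
    show "sets (density (\<Pi>\<^sub>M i\<in>I. M i) (\<lambda>x. \<Prod>i\<in>I. g i (x i))) = sets (\<Pi>\<^sub>M i\<in>I. N i)"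
      unfolding sets_density using sets_N by (intro sets_PiM_cong) simp_all
  next
    fix A assume A: "\<And>i. i \<in> I \<Longrightarrow> A i \<in> sets (N i)"
    then have "Pi\<^sub>E I A \<in> sets (\<Pi>\<^sub>M i\<in>I. M i)"
      using sets_N by (intro sets_PiM_I_finite \<open>finite I\<close>) auto
    then have "emeasure (density (\<Pi>\<^sub>M i\<in>I. M i) (\<lambda>x. \<Prod>i\<in>I. g i (x i))) (Pi\<^sub>E I A)
        = (\<integral>\<^sup>+x. (\<Prod>i\<in>I. g i (x i)) * indicator (Pi\<^sub>E I A) x \<partial>\<Pi>\<^sub>M i\<in>I. M i)"
      using g \<open>finite I\<close> by (subst emeasure_density) auto
    also have "\<dots> = (\<integral>\<^sup>+x. (\<Prod>i\<in>I. g i (x i) * indicator (A i) (x i)) \<partial>\<Pi>\<^sub>M i\<in>I. M i)"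
      using \<open>finite I\<close>
      by (intro nn_integral_cong) (simp add: space_PiM PiE_iff indicator_PiE_eq_prod prod.distrib)
    also have "\<dots> = (\<Prod>i\<in>I. \<integral>\<^sup>+x. g i x * indicator (A i) x \<partial>M i)"
      using A g sets_N \<open>finite I\<close> by (intro M.product_nn_integral_prod) auto
    also have "\<dots> = (\<Prod>i\<in>I. emeasure (N i) (A i))"
      using A g sets_N by (intro prod.cong refl) (simp add: N_def emeasure_density)
    finally show "emeasure (density (\<Pi>\<^sub>M i\<in>I. M i) (\<lambda>x. \<Prod>i\<in>I. g i (x i))) (Pi\<^sub>E I A)
        = (\<Prod>i\<in>I. emeasure (N i) (A i))" .
  qed
  also have "(\<Pi>\<^sub>M i\<in>I. N i) = (\<Pi>\<^sub>M i\<in>I. density (M i) (g i))"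
    by (rule PiM_cong) (simp_all add: N_def)
  finally show ?thesis ..
qed

lemma measure_of_scaled_sum_density:
  fixes M :: "'a measure" and g :: "'s \<Rightarrow> 'a \<Rightarrow> ennreal" and c :: ennreal
  assumes "finite S" "\<And>s. s \<in> S \<Longrightarrow> g s \<in> borel_measurable M"
  shows "measure_of (space M) (sets M) (\<lambda>A. c * (\<Sum>s\<in>S. emeasure (density M (g s)) A))
    = density M (\<lambda>x. c * (\<Sum>s\<in>S. g s x))"
proof -
  have "measure_of (space M) (sets M) (\<lambda>A. c * (\<Sum>s\<in>S. emeasure (density M (g s)) A))
      = measure_of (space M) (sets M) (emeasure (density M (\<lambda>x. c * (\<Sum>s\<in>S. g s x))))"
  proof (rule measure_of_eq[OF sets.space_closed])
    fix A assume "A \<in> sigma_sets (space M) (sets M)"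
    then have "A \<in> sets M"
      by (simp add: sets.sigma_sets_eq)
    then have "c * (\<Sum>s\<in>S. emeasure (density M (g s)) A)
        = c * (\<Sum>s\<in>S. \<integral>\<^sup>+x. g s x * indicator A x \<partial>M)"
      using assms(2) by (simp add: emeasure_density)
    also have "\<dots> = c * (\<integral>\<^sup>+x. (\<Sum>s\<in>S. g s x * indicator A x) \<partial>M)"
      using assms \<open>A \<in> sets M\<close> by (subst nn_integral_sum) auto
    also have "\<dots> = (\<integral>\<^sup>+x. c * (\<Sum>s\<in>S. g s x * indicator A x) \<partial>M)"
      using assms \<open>A \<in> sets M\<close> by (subst nn_integral_cmult) auto
    also have "\<dots> = emeasure (density M (\<lambda>x. c * (\<Sum>s\<in>S. g s x))) A"
      using assms \<open>A \<in> sets M\<close>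
      by (simp add: emeasure_density sum_distrib_right mult.assoc)
    finally show "c * (\<Sum>s\<in>S. emeasure (density M (g s)) A)
        = emeasure (density M (\<lambda>x. c * (\<Sum>s\<in>S. g s x))) A" .
  qed
  then show ?thesis
    using measure_of_of_measure[of "density M (\<lambda>x. c * (\<Sum>s\<in>S. g s x))"] by simp
qed

locale tempered_family =
  fixes M :: "'a measure" and \<Phi> :: "'a \<Rightarrow> real" and T :: "nat \<Rightarrow> ereal" and K :: nat
  assumes prior: "prob_space M"
    and Z_fin: "\<And>k. k \<in> {1..K} \<Longrightarrow> integrable M (\<lambda>x. exp (- tempered \<Phi> (T k) x))"
begin

lemma integrable_exp_tempered_permuted:
  assumes "\<sigma> permutes {1..K}" "k \<in> {1..K}"
  shows "integrable M (\<lambda>x. exp (- tempered \<Phi> (T (\<sigma> k)) x))"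
  using Z_fin permutes_in_image[OF assms(1)] assms(2) by blast

lemma perm_dens_nonneg:
  assumes "\<sigma> permutes {1..K}"
  shows "0 \<le> perm_dens M \<Phi> T K \<sigma> \<theta>"
  unfolding perm_dens_def
  using tdens_pos[OF prior integrable_exp_tempered_permuted[OF assms]]
  by (intro prod_nonneg less_imp_le)

lemma perm_dens_borel_measurable:
  assumes "\<sigma> permutes {1..K}"
  shows "perm_dens M \<Phi> T K \<sigma> \<in> borel_measurable (\<Pi>\<^sub>M k\<in>{1..K}. M)"
  unfolding perm_dens_def[abs_def]
proof (rule borel_measurable_prod)
  fix k assume "k \<in> {1..K}"
  then show "(\<lambda>\<theta>. tdens M \<Phi> (T (\<sigma> k)) (\<theta> k)) \<in> borel_measurable (\<Pi>\<^sub>M k\<in>{1..K}. M)"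
    using tdens_borel_measurable[OF integrable_exp_tempered_permuted[OF assms]] by measurable
qed

lemma perm_meas_eq_density:
  assumes "\<sigma> permutes {1..K}"
  shows "perm_meas M \<Phi> T K \<sigma> = density (\<Pi>\<^sub>M k\<in>{1..K}. M) (perm_dens M \<Phi> T K \<sigma>)"
proof -
  note integrable = integrable_exp_tempered_permuted[OF assms]
  have PiM_eq: "(\<Pi>\<^sub>M k\<in>{1..K}. density M (\<lambda>x. ennreal (tdens M \<Phi> (T (\<sigma> k)) x)))
      = density (\<Pi>\<^sub>M k\<in>{1..K}. M) (\<lambda>\<theta>. \<Prod>k\<in>{1..K}. ennreal (tdens M \<Phi> (T (\<sigma> k)) (\<theta> k)))"
  proof (rule PiM_density)
    show "sigma_finite_measure M"
      using prior by (rule prob_space_imp_sigma_finite)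
    show "sigma_finite_measure (density M (\<lambda>x. ennreal (tdens M \<Phi> (T (\<sigma> k)) x)))"
      if "k \<in> {1..K}" for k
      using prob_space_tmeas[OF prior integrable[OF that]]
      unfolding tmeas_def by (rule prob_space_imp_sigma_finite)
    show "(\<lambda>x. ennreal (tdens M \<Phi> (T (\<sigma> k)) x)) \<in> borel_measurable M" if "k \<in> {1..K}" for k
      using tdens_borel_measurable[OF integrable[OF that]] by measurable
  qed simp
  have prod_eq: "(\<lambda>\<theta>. \<Prod>k\<in>{1..K}. ennreal (tdens M \<Phi> (T (\<sigma> k)) (\<theta> k)))
      = (\<lambda>\<theta>. ennreal (perm_dens M \<Phi> T K \<sigma> \<theta>))"
    unfolding perm_dens_def
  proof (intro ext prod_ennreal)
    show "0 \<le> tdens M \<Phi> (T (\<sigma> k)) (\<theta> k)" if "k \<in> {1..K}" for \<theta> k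
      using tdens_pos[OF prior integrable[OF that]] by (rule less_imp_le)
  qed
  show ?thesis
    using PiM_eq unfolding perm_meas_def tmeas_def prod_eq .
qed

lemma prob_space_density_perm_dens:
  assumes "\<sigma> permutes {1..K}"
  shows "prob_space (density (\<Pi>\<^sub>M k\<in>{1..K}. M) (perm_dens M \<Phi> T K \<sigma>))"
proof -
  have "prob_space (perm_meas M \<Phi> T K \<sigma>)"
    unfolding perm_meas_def
    using prob_space_tmeas[OF prior integrable_exp_tempered_permuted[OF assms]]
    by (intro prob_space_PiM) auto
  then show ?thesis
    unfolding perm_meas_eq_density[OF assms] .
qed

lemma mix_meas_eq_density:
  assumes "finite S" "\<And>\<sigma>. \<sigma> \<in> S \<Longrightarrow> \<sigma> permutes {1..K}"
  shows "mix_meas M \<Phi> T K S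
    = density (\<Pi>\<^sub>M k\<in>{1..K}. M) (\<lambda>\<theta>. 1 / real (card S) * (\<Sum>\<sigma>\<in>S. perm_dens M \<Phi> T K \<sigma> \<theta>))"
proof -
  let ?P = "\<Pi>\<^sub>M k\<in>{1..K}. M"
  have "mix_meas M \<Phi> T K S = measure_of (space ?P) (sets ?P)
      (\<lambda>A. ennreal (1 / real (card S)) * (\<Sum>\<sigma>\<in>S. emeasure (density ?P (perm_dens M \<Phi> T K \<sigma>)) A))"
    unfolding mix_meas_def using assms(2) by (simp add: perm_meas_eq_density cong: sum.cong)
  also have "\<dots> = density ?P
      (\<lambda>\<theta>. ennreal (1 / real (card S)) * (\<Sum>\<sigma>\<in>S. ennreal (perm_dens M \<Phi> T K \<sigma> \<theta>)))"
    using assms perm_dens_borel_measurable by (intro measure_of_scaled_sum_density) auto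
  also have "(\<lambda>\<theta>. ennreal (1 / real (card S)) * (\<Sum>\<sigma>\<in>S. ennreal (perm_dens M \<Phi> T K \<sigma> \<theta>)))
      = (\<lambda>\<theta>. ennreal (1 / real (card S) * (\<Sum>\<sigma>\<in>S. perm_dens M \<Phi> T K \<sigma> \<theta>)))"
  proof
    fix \<theta>
    have "(\<Sum>\<sigma>\<in>S. ennreal (perm_dens M \<Phi> T K \<sigma> \<theta>)) = ennreal (\<Sum>\<sigma>\<in>S. perm_dens M \<Phi> T K \<sigma> \<theta>)"
      using assms(2) perm_dens_nonneg by (intro sum_ennreal) auto
    moreover have "0 \<le> (\<Sum>\<sigma>\<in>S. perm_dens M \<Phi> T K \<sigma> \<theta>)"
      using assms(2) perm_dens_nonneg by (intro sum_nonneg) auto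
    then have "ennreal (1 / real (card S) * (\<Sum>\<sigma>\<in>S. perm_dens M \<Phi> T K \<sigma> \<theta>))
        = ennreal (1 / real (card S)) * ennreal (\<Sum>\<sigma>\<in>S. perm_dens M \<Phi> T K \<sigma> \<theta>)"
      by (intro ennreal_mult) simp_all
    ultimately show "ennreal (1 / real (card S)) * (\<Sum>\<sigma>\<in>S. ennreal (perm_dens M \<Phi> T K \<sigma> \<theta>))
        = ennreal (1 / real (card S) * (\<Sum>\<sigma>\<in>S. perm_dens M \<Phi> T K \<sigma> \<theta>))"
      by (simp only:)
  qed
  finally show ?thesis .
qed

lemma Min_overlap_bounds:
  assumes "finite S" "S \<noteq> {}" "\<And>\<sigma>. \<sigma> \<in> S \<Longrightarrow> \<sigma> permutes {1..K}"
    and "\<And>\<sigma> \<rho>. \<sigma> \<in> S \<Longrightarrow> \<rho> \<in> S \<Longrightarrow> 0 < overlap M \<Phi> T K \<sigma> \<rho>"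
  defines "\<Lambda>m \<equiv> Min {overlap M \<Phi> T K \<sigma> \<rho> | \<sigma> \<rho>. \<sigma> \<in> S \<and> \<rho> \<in> S}"
  shows "0 < \<Lambda>m" and "\<Lambda>m \<le> 1"
    and "\<And>\<sigma> \<rho>. \<sigma> \<in> S \<Longrightarrow> \<rho> \<in> S
      \<Longrightarrow> \<Lambda>m \<le> (\<integral>\<theta>. min (perm_dens M \<Phi> T K \<sigma> \<theta>) (perm_dens M \<Phi> T K \<rho> \<theta>) \<partial>\<Pi>\<^sub>M k\<in>{1..K}. M)"
proof -
  obtain \<sigma>0 \<rho>0 where "\<sigma>0 \<in> S" "\<rho>0 \<in> S" "\<Lambda>m = overlap M \<Phi> T K \<sigma>0 \<rho>0"
    and le: "\<And>\<sigma> \<rho>. \<sigma> \<in> S \<Longrightarrow> \<rho> \<in> S \<Longrightarrow> \<Lambda>m \<le> overlap M \<Phi> T K \<sigma> \<rho>"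
    unfolding \<Lambda>m_def by (rule Min_over_pairs[where g = "overlap M \<Phi> T K", OF assms(1,2)]) blast
  then show "0 < \<Lambda>m" "\<Lambda>m \<le> 1"
    using assms(3,4) prob_space_density_perm_dens perm_dens_borel_measurable perm_dens_nonneg
    by (auto simp: overlap_def intro!: integral_min_density_le_1)
  show "\<Lambda>m \<le> (\<integral>\<theta>. min (perm_dens M \<Phi> T K \<sigma> \<theta>) (perm_dens M \<Phi> T K \<rho> \<theta>) \<partial>\<Pi>\<^sub>M k\<in>{1..K}. M)"
    if "\<sigma> \<in> S" "\<rho> \<in> S" for \<sigma> \<rho>
    using le[OF that] by (simp add: overlap_def)
qed

end

theorem proposition7:
  fixes \<mu>pr :: "'a::{banach, second_countable_topology} measure"
    and \<Phi> :: "'a \<Rightarrow> real"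
    and K :: nat
    and T :: "nat \<Rightarrow> ereal"
    and S :: "(nat \<Rightarrow> nat) set"
    and p :: "nat \<Rightarrow> 'a \<Rightarrow> 'a measure"
    and f :: "(nat \<Rightarrow> 'a) \<Rightarrow> real"
  assumes prior: "prob_space \<mu>pr" "sets \<mu>pr = sets borel"
    and Phi_meas: "\<Phi> \<in> borel_measurable borel"
    and K_pos: "K \<ge> 1"
    and T1: "T 1 = 1"
    and T_mono: "\<And>k. 1 \<le> k \<Longrightarrow> k < K \<Longrightarrow> T k < T (Suc k)"
    and Z_fin: "\<And>k. k \<in> {1..K} \<Longrightarrow> integrable \<mu>pr (\<lambda>x. exp (- tempered \<Phi> (T k) x))"
    and S_perm: "\<And>\<sigma>. \<sigma> \<in> S \<Longrightarrow> \<sigma> permutes {1..K}"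
    and S_ne: "S \<noteq> {}"
    and S_inv: "\<And>\<sigma>. \<sigma> \<in> S \<Longrightarrow> inv \<sigma> \<in> S"
    and kernel: "\<And>k. k \<in> {1..K} \<Longrightarrow> p k \<in> borel \<rightarrow>\<^sub>M prob_algebra borel"
    and invariant: "\<And>k. k \<in> {1..K} \<Longrightarrow> bind (tmeas \<mu>pr \<Phi> (T k)) (p k) = tmeas \<mu>pr \<Phi> (T k)"
    and irred: "\<And>k. k \<in> {1..K} \<Longrightarrow> irreducible_wrt borel (p k) (tmeas \<mu>pr \<Phi> (T k))"
    and aperiodic: "\<And>k. k \<in> {1..K} \<Longrightarrow> aperiodic_wrt borel (p k) (tmeas \<mu>pr \<Phi> (T k))"
    and C1: "\<And>k. k \<in> {1..K} \<Longrightarrow> reversible borel (p k) (tmeas \<mu>pr \<Phi> (T k))"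
    and C2: "\<And>k. k \<in> {1..K} \<Longrightarrow> spectral_gap (p k) (tmeas \<mu>pr \<Phi> (T k))"
    and C3: "\<And>\<sigma> \<rho>. \<sigma> \<in> S \<Longrightarrow> \<rho> \<in> S \<Longrightarrow> overlap \<mu>pr \<Phi> T K \<sigma> \<rho> > 0"
    and f_meas: "f \<in> borel_measurable (mix_meas \<mu>pr \<Phi> T K S)"
    and f_L2: "integrable (mix_meas \<mu>pr \<Phi> T K S) (\<lambda>\<theta>. (f \<theta>)\<^sup>2)"
    and f_mean: "(\<integral>\<theta>. f \<theta> \<partial>mix_meas \<mu>pr \<Phi> T K S) = 0"
    and f_norm: "(\<integral>\<theta>. (f \<theta>)\<^sup>2 \<partial>mix_meas \<mu>pr \<Phi> T K S) = 1"
  shows "(let \<Lambda>m = Min {overlap \<mu>pr \<Phi> T K \<sigma> \<rho> | \<sigma> \<rho>. \<sigma> \<in> S \<and> \<rho> \<in> S} in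
           0 < \<Lambda>m / (2 - \<Lambda>m)
         \<and> \<Lambda>m / (2 - \<Lambda>m) \<le> (1 / real (card S)) * (\<Sum>\<sigma>\<in>S. variance_of (perm_meas \<mu>pr \<Phi> T K \<sigma>) f)
         \<and> (1 / real (card S)) * (\<Sum>\<sigma>\<in>S. variance_of (perm_meas \<mu>pr \<Phi> T K \<sigma>) f)
             \<le> variance_of (mix_meas \<mu>pr \<Phi> T K S) f
         \<and> variance_of (mix_meas \<mu>pr \<Phi> T K S) f = 1)"
proof -
  interpret tempered_family \<mu>pr \<Phi> T K
    using prior(1) Z_fin by (rule tempered_family.intro)
  let ?P = "\<Pi>\<^sub>M k\<in>{1..K}. \<mu>pr"
  let ?\<pi> = "perm_dens \<mu>pr \<Phi> T K"
  have "finite S"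
    using S_perm by (intro finite_subset[OF _ finite_permutations[of "{1..K}"]]) auto
  have mix: "mix_meas \<mu>pr \<Phi> T K S = density ?P (\<lambda>\<theta>. 1 / real (card S) * (\<Sum>\<sigma>\<in>S. ?\<pi> \<sigma> \<theta>))"
    using \<open>finite S\<close> S_perm by (rule mix_meas_eq_density)
  define \<Lambda>m where "\<Lambda>m = Min {overlap \<mu>pr \<Phi> T K \<sigma> \<rho> | \<sigma> \<rho>. \<sigma> \<in> S \<and> \<rho> \<in> S}"
  note \<Lambda>m = Min_overlap_bounds[OF \<open>finite S\<close> S_ne S_perm C3, folded \<Lambda>m_def]
  have "f \<in> borel_measurable ?P"
    using f_meas by (simp add: mix)
  note bounds = mixture_variance_bounds[where \<pi> = ?\<pi> and L = \<Lambda>m,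
      OF \<open>finite S\<close> S_ne prob_space_density_perm_dens[OF S_perm]
      perm_dens_borel_measurable[OF S_perm] perm_dens_nonneg[OF S_perm] this
      f_L2[unfolded mix] f_mean[unfolded mix] \<Lambda>m(3)]
  have "variance_of (mix_meas \<mu>pr \<Phi> T K S) f = 1"
    using f_mean f_norm by (simp add: variance_of_def)
  then show ?thesis
    using \<Lambda>m(1,2) bounds perm_meas_eq_density[OF S_perm] unfolding \<Lambda>m_def[symmetric] Let_def mix
    by (simp cong: sum.cong)
qed

end
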